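(* Let $n=p^{\alpha}q^{\beta}$ where $p,q$ are distinct primes and $\alpha,\beta\geq 1$ are integers. Then the complement graph $\mathbb{AG}^c(\mathbb{Z}_n)$ of $\mathbb{AG}(\mathbb{Z}_n)$ has no induced cycle of odd length greater than $3$.
   Context: For a commutative ring $R$ with unity, the annihilating-ideal graph $\mathbb{AG}(R)$ is the simple graph whose vertex set is the set of all non-zero ideals of $R$ with non-zero annihilator, two distinct vertices $I,J$ being adjacent if and only if $IJ=0$. $\mathbb{AG}^c(R)$ denotes its complement (same vertex set, two distinct vertices adjacent iff they are not adjacent in $\mathbb{AG}(R)$). An induced cycle is an induced subgraph isomorphic to a cycle. *)

theory Defs
  imports "HOL-Algebra.Ideal_Product" "HOL-Number_Theory.Residues"
begin

definition ann :: "('a, 'b) ring_scheme \<Rightarrow> 'a set \<Rightarrow> 'a set" where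
  "ann R I = {x \<in> carrier R. \<forall>i\<in>I. x \<otimes>\<^bsub>R\<^esub> i = \<zero>\<^bsub>R\<^esub>}"

definition AG_vertices :: "('a, 'b) ring_scheme \<Rightarrow> 'a set set" where
  "AG_vertices R = {I. ideal I R \<and> I \<noteq> {\<zero>\<^bsub>R\<^esub>} \<and> ann R I \<noteq> {\<zero>\<^bsub>R\<^esub>}}"

definition AG_adj :: "('a, 'b) ring_scheme \<Rightarrow> 'a set \<Rightarrow> 'a set \<Rightarrow> bool" where
  "AG_adj R I J \<longleftrightarrow> I \<noteq> J \<and> ideal_prod R I J = {\<zero>\<^bsub>R\<^esub>}"

definition AGc_adj :: "('a, 'b) ring_scheme \<Rightarrow> 'a set \<Rightarrow> 'a set \<Rightarrow> bool" where
  "AGc_adj R I J \<longleftrightarrow> I \<noteq> J \<and> \<not> AG_adj R I J"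

definition induced_cycle :: "'v set \<Rightarrow> ('v \<Rightarrow> 'v \<Rightarrow> bool) \<Rightarrow> 'v list \<Rightarrow> bool" where
  "induced_cycle V E vs \<longleftrightarrow>
     length vs \<ge> 3 \<and> distinct vs \<and> set vs \<subseteq> V \<and>
     (\<forall>i < length vs. \<forall>j < length vs.
        E (vs ! i) (vs ! j) \<longleftrightarrow> (j = Suc i mod length vs \<or> i = Suc j mod length vs))"

end

theory Submission
  imports Defs
begin

text \<open>
  In \<open>\<int>\<^sub>n\<close> with \<open>n = p\<^sup>\<alpha> q\<^sup>\<beta>\<close>, two ideals have product zero iff
  \<open>p\<^sup>\<alpha>\<close> divides all their products and \<open>q\<^sup>\<beta>\<close> does. Each of these two relations \<open>R\<close> has an
  exchange property: \<open>R A C\<close> and \<open>R B D\<close> imply \<open>R A B\<close> or \<open>R C D\<close>, because the \<open>p\<close>-adic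
  valuations of \<open>x x'\<close> and \<open>y y'\<close> add up to those of \<open>x y\<close> and \<open>x' y'\<close>.
  Along an induced cycle \<open>v\<^sub>0 v\<^sub>1 \<dots>\<close> of the complement graph every edge \<open>v\<^sub>i v\<^sub>i\<^sub>+\<^sub>1\<close> violates
  one of the two relations, while two edges \<open>v\<^sub>i v\<^sub>i\<^sub>+\<^sub>1\<close>, \<open>v\<^sub>j v\<^sub>j\<^sub>+\<^sub>1\<close> with non-adjacent endpoints
  cannot violate the same one by the exchange property. If the cycle has length at least 5,
  the edges 0, 2, 4, 1, 3 are consecutively such far pairs and form an odd cycle, which
  cannot be 2-coloured by the violated relation. So induced cycles have length at most 4.
\<close>

definition exchange_rel :: "('a \<Rightarrow> 'a \<Rightarrow> bool) \<Rightarrow> bool" where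
  "exchange_rel R \<longleftrightarrow> (\<forall>A B C D. R A C \<longrightarrow> R B D \<longrightarrow> R A B \<or> R C D)"

definition dvd_all_products :: "'a::comm_semiring_1 \<Rightarrow> 'a set \<Rightarrow> 'a set \<Rightarrow> bool" where
  "dvd_all_products m A B \<longleftrightarrow> (\<forall>x\<in>A. \<forall>y\<in>B. m dvd x * y)"

lemma prime_power_dvd_mult_exchange:
  fixes p :: "'a::factorial_semiring"
  assumes "prime_elem p" "p ^ a dvd x * x'" "p ^ a dvd y * y'"
  shows "p ^ a dvd x * y \<or> p ^ a dvd x' * y'"
proof (cases "x = 0 \<or> x' = 0 \<or> y = 0 \<or> y' = 0")
  case True
  then show ?thesis by auto
next
  case False
  have dvd_iff: "p ^ a dvd u * v \<longleftrightarrow> a \<le> multiplicity p u + multiplicity p v"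
    if "u \<noteq> 0" "v \<noteq> 0" for u v
    using that assms(1)
    by (simp add: power_dvd_iff_le_multiplicity prime_elem_multiplicity_mult_distrib)
  show ?thesis
    using assms(2,3) False by (simp add: dvd_iff) linarith
qed

lemma exchange_rel_dvd_all_products_prime_power:
  fixes p :: "'a::factorial_semiring"
  assumes "prime_elem p"
  shows "exchange_rel (dvd_all_products (p ^ a))"
  unfolding exchange_rel_def dvd_all_products_def
  using prime_power_dvd_mult_exchange[OF assms] by blast

lemma dvd_all_products_coprime_mult_iff:
  fixes a b :: "'a::semiring_gcd"
  assumes "coprime a b"
  shows "dvd_all_products (a * b) A B \<longleftrightarrow> dvd_all_products a A B \<and> dvd_all_products b A B"
  unfolding dvd_all_products_def
  using assms by (auto intro: divides_mult dvd_mult_left dvd_mult_right)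

lemma (in ring) ideal_prod_eq_zero_iff:
  assumes "ideal I R" "ideal J R"
  shows "I \<cdot> J = {\<zero>} \<longleftrightarrow> (\<forall>i\<in>I. \<forall>j\<in>J. i \<otimes> j = \<zero>)"
proof
  assume zero_prod: "I \<cdot> J = {\<zero>}"
  show "\<forall>i\<in>I. \<forall>j\<in>J. i \<otimes> j = \<zero>"
  proof (intro ballI)
    fix i j assume "i \<in> I" "j \<in> J"
    then have "i \<otimes> j \<in> I \<cdot> J"
      by (rule ideal_prod.prod)
    with zero_prod show "i \<otimes> j = \<zero>"
      by simp
  qed
next
  assume zero_products: "\<forall>i\<in>I. \<forall>j\<in>J. i \<otimes> j = \<zero>"
  have "I \<cdot> J \<subseteq> {\<zero>}"
  proof
    fix s assume "s \<in> I \<cdot> J"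
    then show "s \<in> {\<zero>}"
    proof (induct s rule: ideal_prod.induct)
      case (prod i j)
      then show ?case using zero_products by simp
    next
      case (sum s1 s2)
      then show ?case by simp
    qed
  qed
  moreover have "\<zero> \<in> I \<cdot> J"
    using ideal.axioms(1)[OF ideal_prod_is_ideal[OF assms]] by (rule additive_subgroup.zero_closed)
  ultimately show "I \<cdot> J = {\<zero>}"
    by blast
qed

lemma residue_ring_ideal_prod_eq_zero_iff:
  fixes N :: int
  assumes "N > 1" "ideal I (residue_ring N)" "ideal J (residue_ring N)"
  shows "ideal_prod (residue_ring N) I J = {0} \<longleftrightarrow> dvd_all_products N I J"
proof -
  interpret residues N "residue_ring N"
    using assms(1) by unfold_locales auto
  show ?thesis
    using ideal_prod_eq_zero_iff[OF assms(2,3)]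
    by (simp add: dvd_all_products_def res_zero_eq res_mult_eq dvd_eq_mod_eq_0)
qed

lemma AGc_adj_residue_ring_coprime_mult_iff:
  fixes a b :: int
  assumes "coprime a b" "a * b > 1"
    and "ideal I (residue_ring (a * b))" "ideal J (residue_ring (a * b))"
  shows "AGc_adj (residue_ring (a * b)) I J \<longleftrightarrow>
           I \<noteq> J \<and> \<not> (dvd_all_products a I J \<and> dvd_all_products b I J)"
proof -
  have "\<zero>\<^bsub>residue_ring (a * b)\<^esub> = 0"
    by (simp add: residue_ring_def)
  then show ?thesis
    using residue_ring_ideal_prod_eq_zero_iff[OF assms(2-4)]
      dvd_all_products_coprime_mult_iff[OF assms(1)]
    by (auto simp: AGc_adj_def AG_adj_def)
qed

lemma mod_add_neq_self:
  fixes i d k :: nat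
  assumes "0 < d" "d < k"
  shows "(i + d) mod k \<noteq> i mod k"
proof
  assume "(i + d) mod k = i mod k"
  then have "k dvd d"
    using mod_eq_dvd_iff_nat[of i "i + d" k] by simp
  with assms show False
    by (simp add: nat_dvd_not_less)
qed

lemma induced_cycle_adjacent:
  assumes "induced_cycle V E vs"
  shows "E (vs ! (i mod length vs)) (vs ! (Suc i mod length vs))"
proof -
  have "length vs > 0"
    using assms by (auto simp: induced_cycle_def)
  moreover have "Suc i mod length vs = Suc (i mod length vs) mod length vs"
    by (simp add: mod_Suc_eq)
  ultimately show ?thesis
    using assms unfolding induced_cycle_def by simp
qed

lemma induced_cycle_nonadjacent:
  assumes cyc: "induced_cycle V E vs" and "i + 2 \<le> j" "j + 2 \<le> i + length vs"
  shows "vs ! (i mod length vs) \<noteq> vs ! (j mod length vs)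
           \<and> \<not> E (vs ! (i mod length vs)) (vs ! (j mod length vs))"
proof -
  let ?k = "length vs"
  define d where "d = j - i"
  have j: "j = i + d" and d: "2 \<le> d" "d + 2 \<le> ?k"
    using assms(2,3) unfolding d_def by simp_all
  have "j mod ?k \<noteq> i mod ?k"
    unfolding j using d by (intro mod_add_neq_self) auto
  moreover have "j mod ?k \<noteq> Suc (i mod ?k) mod ?k"
    using mod_add_neq_self[of "d - 1" ?k "Suc i"] d unfolding j mod_Suc_eq by simp
  moreover have "i mod ?k \<noteq> Suc (j mod ?k) mod ?k"
    using mod_add_neq_self[of "d + 1" ?k i] d unfolding j mod_Suc_eq by simp
  moreover have "?k > 0"
    using d by linarith
  ultimately show ?thesis
    using cyc unfolding induced_cycle_def by (simp add: nth_eq_iff_index_eq)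
qed

lemma induced_cycle_length_less_5:
  assumes exchange: "exchange_rel \<Phi>" "exchange_rel \<Psi>"
    and adj: "\<And>u v. u \<in> V \<Longrightarrow> v \<in> V \<Longrightarrow> E u v \<longleftrightarrow> u \<noteq> v \<and> \<not> (\<Phi> u v \<and> \<Psi> u v)"
    and cyc: "induced_cycle V E vs"
  shows "length vs < 5"
proof (rule ccontr)
  assume "\<not> length vs < 5"
  then have len: "5 \<le> length vs" by simp
  define w where "w i = vs ! (i mod length vs)" for i
  have w_in_V: "w i \<in> V" for i
  proof -
    have "w i \<in> set vs"
      using len unfolding w_def by (intro nth_mem mod_less_divisor) linarith
    then show ?thesis
      using cyc unfolding induced_cycle_def by blast
  qed
  define f where "f R i = R (w i) (w (Suc i))" for R :: "'a \<Rightarrow> 'a \<Rightarrow> bool" and i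
  have edge: "\<not> f \<Phi> i \<or> \<not> f \<Psi> i" for i
    using induced_cycle_adjacent[OF cyc, of i] adj w_in_V unfolding w_def f_def by blast
  have nonadj: "\<Phi> (w i) (w j) \<and> \<Psi> (w i) (w j)" if "i + 2 \<le> j" "j + 2 \<le> i + length vs" for i j
    using induced_cycle_nonadjacent[OF cyc that] adj w_in_V unfolding w_def by blast
  have far: "f R i \<or> f R j"
    if "R = \<Phi> \<or> R = \<Psi>" "i + 2 \<le> j" "j + 2 \<le> i + length vs" for R i j
  proof -
    have "exchange_rel R"
      using that(1) exchange by blast
    moreover have "R (w i) (w j)" "R (w (Suc i)) (w (Suc j))"
      using nonadj[of i j] nonadj[of "Suc i" "Suc j"] that by auto
    ultimately show ?thesis
      unfolding exchange_rel_def f_def by blast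
  qed
  have cover: "(f R 0 \<or> f R 2) \<and> (f R 2 \<or> f R 4) \<and> (f R 4 \<or> f R 1) \<and>
      (f R 1 \<or> f R 3) \<and> (f R 3 \<or> f R 0)"
    if "R = \<Phi> \<or> R = \<Psi>" for R
    using far[OF that, of 0 2] far[OF that, of 2 4] far[OF that, of 1 4]
      far[OF that, of 1 3] far[OF that, of 0 3] len
    by auto
  show False
    using cover[OF disjI1[OF refl]] cover[OF disjI2[OF refl]]
      edge[of 0] edge[of 1] edge[of 2] edge[of 3] edge[of 4]
    by argo
qed

lemma residue_ring_prime_powers_induced_cycle_length_less_5:
  fixes p q :: int and \<alpha> \<beta> :: nat
  defines "R \<equiv> residue_ring (p ^ \<alpha> * q ^ \<beta>)"
  assumes "prime p" "prime q" "p \<noteq> q" "p ^ \<alpha> * q ^ \<beta> > 1"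
    and "induced_cycle (AG_vertices R) (AGc_adj R) vs"
  shows "length vs < 5"
proof -
  have "coprime (p ^ \<alpha>) (q ^ \<beta>)"
    using primes_coprime[OF assms(2-4)] by simp
  then have adj: "AGc_adj R I J \<longleftrightarrow>
      I \<noteq> J \<and> \<not> (dvd_all_products (p ^ \<alpha>) I J \<and> dvd_all_products (q ^ \<beta>) I J)"
    if "I \<in> AG_vertices R" "J \<in> AG_vertices R" for I J
    using that AGc_adj_residue_ring_coprime_mult_iff assms(5)
    unfolding R_def AG_vertices_def by blast
  have "exchange_rel (dvd_all_products (p ^ \<alpha>))" "exchange_rel (dvd_all_products (q ^ \<beta>))"
    by (intro exchange_rel_dvd_all_products_prime_power prime_imp_prime_elem assms(2,3))+
  then show ?thesis
    using adj assms(6) by (rule induced_cycle_length_less_5)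
qed

theorem lemma7:
  fixes p q \<alpha> \<beta> n :: nat
  assumes "prime p" and "prime q" and "p \<noteq> q"
    and "\<alpha> \<ge> 1" and "\<beta> \<ge> 1"
    and "n = p ^ \<alpha> * q ^ \<beta>"
  shows "\<not> (\<exists>vs. induced_cycle (AG_vertices (residue_ring (int n))) (AGc_adj (residue_ring (int n))) vs
               \<and> odd (length vs) \<and> length vs > 3)"
proof
  assume "\<exists>vs. induced_cycle (AG_vertices (residue_ring (int n))) (AGc_adj (residue_ring (int n))) vs
               \<and> odd (length vs) \<and> length vs > 3"
  then obtain vs where cyc: "induced_cycle (AG_vertices (residue_ring (int n))) (AGc_adj (residue_ring (int n))) vs"
    and "odd (length vs)" "length vs > 3"
    by blast
  have n_eq: "int n = int p ^ \<alpha> * int q ^ \<beta>"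
    using assms(6) by simp
  have "1 < int p ^ \<alpha>"
    using assms(4) prime_gt_1_nat[OF assms(1)] by simp
  moreover have "1 \<le> int q ^ \<beta>"
    using prime_gt_1_nat[OF assms(2)] by simp
  ultimately have "1 < int p ^ \<alpha> * int q ^ \<beta>"
    using mult_less_le_imp_less[of 1 "int p ^ \<alpha>" 1 "int q ^ \<beta>"] by simp
  then have "length vs < 5"
    using assms(1-3) cyc unfolding n_eq
    by (intro residue_ring_prime_powers_induced_cycle_length_less_5) simp_all
  moreover have "length vs \<ge> 5"
    using \<open>odd (length vs)\<close> \<open>length vs > 3\<close> by presburger
  ultimately show False
    by simp
qed

end
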